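(* For every ordinal $\beta\leq\omega_1$ and every $\alpha<\beta$, in $\mathbb{S}(\beta)$ the fiber $I\times\{\alpha\}$ belongs to $\sigma(\llbracket\mathcal{L}\rrbracket)$.
   Context: An LMP is $(S,\Sigma,\{\tau_a\}_{a\in L})$ with $L$ countable and Markov kernels $\tau_a$. The logic $\mathcal{L}$ has formulas $\phi::=\top\mid\phi\wedge\psi\mid\langle a\rangle_{>q}\phi$ ($a\in L$, $q\in\mathbb{Q}\cap[0,1]$) with $\llbracket\top\rrbracket=S$, $\llbracket\phi\wedge\psi\rrbracket=\llbracket\phi\rrbracket\cap\llbracket\psi\rrbracket$, $\llbracket\langle a\rangle_{>q}\phi\rrbracket=\{s:\tau_a(s,\llbracket\phi\rrbracket)>q\}$; $\sigma(\llbracket\mathcal{L}\rrbracket)$ is the $\sigma$-algebra generated by all $\llbracket\phi\rrbracket$. The processes $\mathbb{S}(\beta)$: $I=(0,1)$, $\mathfrak{m}$ Lebesgue measure, $V\subseteq I$ Lebesgue nonmeasurable, $\mathcal{B}_V=\sigma(\mathcal{B}(I)\cup\{V\})$, and $\mathfrak{m}_0,\mathfrak{m}_1$ measures on $\mathcal{B}_V$ extending $\mathfrak{m}$ with $\mathfrak{m}_0(V)\neq\mathfrak{m}_1(V)$. Let $\{q_n\}_{n\in\omega}$ enumerate $\mathbb{Q}\cap I$. For ordinals $\eta$: $\alpha_n(0)=0$, $\alpha_n(\zeta+1)=\zeta$ for all $n$, and for limit $\lambda$, $(\alpha_n(\lambda))_{n\in\omega}$ is a fixed strictly increasing sequence of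 nonzero ordinals below $\lambda$ cofinal in $\lambda$. For an ordinal $\beta\leq\omega_1$, $\mathbb{S}(\beta)=(I\times\beta,\ \mathcal{B}_V\otimes\mathcal{P}(\beta),\ \{\tau_n\}_{n\in\omega})$ with $\tau_n((x,\eta),A)=x\cdot\mathfrak{m}_0(A_0)$ if $\eta=0$; $=\mathfrak{m}_0(A_{\alpha_n(\eta)})$ if $\eta>0$ and $x<q_n$; $=\mathfrak{m}_1(A_{\alpha_n(\eta)})$ if $\eta>0$ and $x\geq q_n$; here $A_\gamma=\{r:(r,\gamma)\in A\}$. These $\tau_n$ are Markov kernels, so $\mathbb{S}(\beta)$ is an LMP. *)

theory Defs
  imports "HOL-Analysis.Analysis"
begin

text \<open>An ordinal beta is represented by a type 'b of class wellorder (its elements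
are the ordinals alpha < beta).  beta \<le> omega_1 iff every proper initial segment is countable.\<close>

definition ord_zero :: "'b::wellorder" where
  "ord_zero = (LEAST x. True)"

definition is_succ_of :: "'b::wellorder \<Rightarrow> 'b \<Rightarrow> bool" where
  "is_succ_of \<eta> \<zeta> \<longleftrightarrow> \<zeta> < \<eta> \<and> (\<forall>\<xi>. \<not> (\<zeta> < \<xi> \<and> \<xi> < \<eta>))"

definition is_limit :: "'b::wellorder \<Rightarrow> bool" where
  "is_limit l \<longleftrightarrow> l \<noteq> ord_zero \<and> (\<forall>\<zeta>. \<not> is_succ_of l \<zeta>)"

definition alpha_seq :: "(nat \<Rightarrow> 'b::wellorder \<Rightarrow> 'b) \<Rightarrow> bool" where
  "alpha_seq \<alpha> \<longleftrightarrow>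
     (\<forall>n. \<alpha> n ord_zero = ord_zero) \<and>
     (\<forall>n \<eta> \<zeta>. is_succ_of \<eta> \<zeta> \<longrightarrow> \<alpha> n \<eta> = \<zeta>) \<and>
     (\<forall>l. is_limit l \<longrightarrow>
        strict_mono (\<lambda>n. \<alpha> n l) \<and>
        (\<forall>n. ord_zero < \<alpha> n l \<and> \<alpha> n l < l) \<and>
        (\<forall>\<zeta>. \<zeta> < l \<longrightarrow> (\<exists>n. \<zeta> \<le> \<alpha> n l)))"

definition I01 :: "real set" where
  "I01 = {0<..<1}"

definition BV :: "real set \<Rightarrow> real set set" where
  "BV V = sigma_sets I01 (sets (restrict_space borel I01) \<union> {V})"

definition extends_lebesgue :: "real set \<Rightarrow> real measure \<Rightarrow> bool" where
  "extends_lebesgue V M \<longleftrightarrow> space M = I01 \<and> sets M = BV V \<and>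
     (\<forall>A \<in> sets borel. A \<subseteq> I01 \<longrightarrow> emeasure M A = emeasure lborel A)"

definition fiber :: "(real \<times> 'b) set \<Rightarrow> 'b \<Rightarrow> real set" where
  "fiber A \<gamma> = {r. (r, \<gamma>) \<in> A}"

definition tauS :: "real measure \<Rightarrow> real measure \<Rightarrow> (nat \<Rightarrow> real) \<Rightarrow> (nat \<Rightarrow> 'b::wellorder \<Rightarrow> 'b)
    \<Rightarrow> nat \<Rightarrow> real \<times> 'b \<Rightarrow> (real \<times> 'b) set \<Rightarrow> real" where
  "tauS m0 m1 q \<alpha> n s A =
     (let x = fst s; \<eta> = snd s in
      if \<eta> = ord_zero then x * measure m0 (fiber A ord_zero)
      else if x < q n then measure m0 (fiber A (\<alpha> n \<eta>))
      else measure m1 (fiber A (\<alpha> n \<eta>)))"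

datatype frm = FTop | FAnd frm frm | FDia nat rat frm

fun wf_frm :: "frm \<Rightarrow> bool" where
  "wf_frm FTop = True"
| "wf_frm (FAnd f g) = (wf_frm f \<and> wf_frm g)"
| "wf_frm (FDia a q f) = (0 \<le> q \<and> q \<le> 1 \<and> wf_frm f)"

fun sem :: "'s set \<Rightarrow> (nat \<Rightarrow> 's \<Rightarrow> 's set \<Rightarrow> real) \<Rightarrow> frm \<Rightarrow> 's set" where
  "sem S T FTop = S"
| "sem S T (FAnd f g) = sem S T f \<inter> sem S T g"
| "sem S T (FDia a q f) = {s \<in> S. T a s (sem S T f) > real_of_rat q}"

definition sigma_L :: "'s set \<Rightarrow> (nat \<Rightarrow> 's \<Rightarrow> 's set \<Rightarrow> real) \<Rightarrow> 's set set" where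
  "sigma_L S T = sigma_sets S {sem S T f | f. wf_frm f}"

end

theory Submission
  imports Defs "HOL-Probability.Probability_Measure"
begin

text \<open>
  The sigma-algebra generated by the formula sets is closed under the modalities: for A in it,
  the map s \<mapsto> \<tau>_n(s, A) is measurable with respect to it. For formula sets this is
  the semantics of the modality with rational thresholds together with density of the
  rationals; since the formula sets are closed under intersection, Dynkin's lemma extends it to
  the whole sigma-algebra, using only that each \<tau>_n(s, -) is a subprobability on it.
  The fibers are then obtained by well-founded induction on the level:
  I \<times> {0} = {s. \<tau>_0(s, I \<times> \<beta>) < 1}, and for \<alpha> > 0,
  I \<times> {\<alpha>} = (\<Inter>n. {s. \<tau>_n(s, I \<times> {\<alpha>_n(\<alpha>)}) > 1/2}) - I \<times> {0},
  because a nonzero ordinal is determined by its sequence (\<alpha>_n(\<alpha>))_n.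
\<close>

lemma sem_subset: "sem S T f \<subseteq> S"
  by (induction f) auto

definition L_measure :: "'s set \<Rightarrow> (nat \<Rightarrow> 's \<Rightarrow> 's set \<Rightarrow> real) \<Rightarrow> 's measure" where
  "L_measure S T = sigma S {sem S T f | f. wf_frm f}"

lemma formula_sets_subset_Pow: "{sem S T f | f. wf_frm f} \<subseteq> Pow S"
  using sem_subset[of S T] by blast

lemma space_L_measure [simp]: "space (L_measure S T) = S"
  unfolding L_measure_def by (rule space_measure_of[OF formula_sets_subset_Pow])

lemma sets_L_measure [simp]: "sets (L_measure S T) = sigma_L S T"
  unfolding L_measure_def sigma_L_def by (rule sets_measure_of[OF formula_sets_subset_Pow])

lemma Int_stable_formula_sets: "Int_stable {sem S T f | f. wf_frm f}"
proof (rule Int_stableI)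
  fix A B assume "A \<in> {sem S T f | f. wf_frm f}" "B \<in> {sem S T f | f. wf_frm f}"
  then obtain f g where "A = sem S T f" "B = sem S T g" "wf_frm f" "wf_frm g" by blast
  then have "A \<inter> B = sem S T (FAnd f g)" "wf_frm (FAnd f g)" by auto
  then show "A \<inter> B \<in> {sem S T f | f. wf_frm f}" by blast
qed

lemma sigma_algebra_sigma_L: "sigma_algebra S (sigma_L S T)"
  unfolding sigma_L_def by (rule sigma_algebra_sigma_sets[OF formula_sets_subset_Pow])

lemma formula_in_sigma_L: "wf_frm f \<Longrightarrow> sem S T f \<in> sigma_L S T"
  unfolding sigma_L_def by (blast intro: sigma_sets.Basic)

lemma greater_level_eq_UN_rat:
  fixes g :: "'s \<Rightarrow> real"
  shows "{s \<in> S. a < g s} = (\<Union>r\<in>{r. a < of_rat r}. {s \<in> S. of_rat r < g s})"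
proof (intro set_eqI iffI)
  fix s assume "s \<in> {s \<in> S. a < g s}"
  then obtain r where "a < of_rat r" "of_rat r < g s" "s \<in> S" using of_rat_dense by blast
  then show "s \<in> (\<Union>r\<in>{r. a < of_rat r}. {s \<in> S. of_rat r < g s})" by blast
next
  fix s assume "s \<in> (\<Union>r\<in>{r. a < of_rat r}. {s \<in> S. of_rat r < g s})"
  then obtain r where "a < of_rat r" "of_rat r < g s" "s \<in> S" by blast
  then show "s \<in> {s \<in> S. a < g s}" by simp
qed

text \<open>No measurability of the kernels is assumed: it is what the locale proves.\<close>

locale subprob_kernels_on_sigma_L =
  fixes S :: "'s set" and T :: "nat \<Rightarrow> 's \<Rightarrow> 's set \<Rightarrow> real"
  assumes kernel_nonneg: "\<And>n s A. s \<in> S \<Longrightarrow> A \<in> sigma_L S T \<Longrightarrow> 0 \<le> T n s A"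
    and kernel_le_1: "\<And>n s A. s \<in> S \<Longrightarrow> A \<in> sigma_L S T \<Longrightarrow> T n s A \<le> 1"
    and kernel_sums: "\<And>n s A. s \<in> S \<Longrightarrow> disjoint_family A \<Longrightarrow> range A \<subseteq> sigma_L S T \<Longrightarrow>
      (\<lambda>i. T n s (A i)) sums T n s (\<Union>i. A i)"
begin

lemma kernel_empty:
  assumes "s \<in> S"
  shows "T n s {} = 0"
proof -
  have "(\<lambda>i. T n s ((\<lambda>_::nat. {}) i)) sums T n s (\<Union>i. (\<lambda>_::nat. {}) i)"
    by (rule kernel_sums[OF assms])
      (auto simp: disjoint_family_on_def sigma_L_def intro: sigma_sets.Empty)
  then have "(\<lambda>i. T n s {}) \<longlonglongrightarrow> 0"
    by (intro summable_LIMSEQ_zero sums_summable) simp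
  then show ?thesis by (simp add: LIMSEQ_const_iff)
qed

lemma kernel_Diff:
  assumes "s \<in> S" "A \<in> sigma_L S T"
  shows "T n s (S - A) = T n s S - T n s A"
proof -
  have "S - A \<in> sigma_L S T" using assms(2) unfolding sigma_L_def by (rule sigma_sets.Compl)
  then have "(\<lambda>i. T n s (binaryset A (S - A) i)) sums T n s (\<Union>i. binaryset A (S - A) i)"
    using assms sigma_sets.Empty
    by (intro kernel_sums) (auto simp: disjoint_family_on_def binaryset_def sigma_L_def)
  moreover have "(\<lambda>i. T n s (binaryset A (S - A) i)) sums (T n s A + T n s (S - A))"
    using kernel_empty[OF assms(1)] by (rule binaryset_sums)
  moreover have "(\<Union>i. binaryset A (S - A) i) = S"
    using sigma_sets_into_sp[OF formula_sets_subset_Pow] assms(2)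
    by (auto simp: UN_binaryset_eq sigma_L_def)
  ultimately show ?thesis using sums_unique2 by fastforce
qed

lemma rational_level_formula_in_sigma_L:
  assumes f: "wf_frm f"
  shows "{s \<in> S. of_rat r < T n s (sem S T f)} \<in> sigma_L S T"
proof (cases "0 \<le> r \<and> r \<le> 1")
  case True
  then have "{s \<in> S. of_rat r < T n s (sem S T f)} = sem S T (FDia n r f)" by simp
  then show ?thesis using True f formula_in_sigma_L[of "FDia n r f"] by simp
next
  case False
  then consider "of_rat r < (0::real)" | "(1::real) < of_rat r" by fastforce
  then have "{s \<in> S. of_rat r < T n s (sem S T f)} = S \<or> {s \<in> S. of_rat r < T n s (sem S T f)} = {}"
  proof cases
    case 1
    have "of_rat r < T n s (sem S T f)" if "s \<in> S" for s
      using 1 kernel_nonneg[OF that formula_in_sigma_L[OF f], of n] by linarith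
    then show ?thesis by blast
  next
    case 2
    have "\<not> of_rat r < T n s (sem S T f)" if "s \<in> S" for s
      using 2 kernel_le_1[OF that formula_in_sigma_L[OF f], of n] by linarith
    then show ?thesis by blast
  qed
  then show ?thesis
    unfolding sigma_L_def by (elim disjE) (simp_all only: sigma_sets_top sigma_sets.Empty)
qed

lemma measurable_kernel_formula:
  assumes f: "wf_frm f"
  shows "(\<lambda>s. T n s (sem S T f)) \<in> borel_measurable (L_measure S T)"
  unfolding borel_measurable_iff_greater space_L_measure sets_L_measure
proof
  fix a :: real
  have "{s \<in> S. a < T n s (sem S T f)} =
      (\<Union>r\<in>{r. a < of_rat r}. {s \<in> S. of_rat r < T n s (sem S T f)})"
    by (rule greater_level_eq_UN_rat)
  also have "\<dots> \<in> sigma_L S T"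
    using rational_level_formula_in_sigma_L[OF f]
    by (intro sigma_algebra.countable_UN[OF sigma_algebra_sigma_L]) blast
  finally show "{s \<in> S. a < T n s (sem S T f)} \<in> sigma_L S T" .
qed

lemma measurable_kernel:
  assumes "A \<in> sigma_L S T"
  shows "(\<lambda>s. T n s A) \<in> borel_measurable (L_measure S T)"
  using Int_stable_formula_sets formula_sets_subset_Pow assms[unfolded sigma_L_def]
proof (induction rule: sigma_sets_induct_disjoint)
  case (basic A)
  then obtain f where "A = sem S T f" "wf_frm f" by blast
  then show ?case using measurable_kernel_formula by simp
next
  case empty
  have "(\<lambda>s. T n s {}) \<in> borel_measurable (L_measure S T) \<longleftrightarrow>
      (\<lambda>s. 0::real) \<in> borel_measurable (L_measure S T)"
    by (rule measurable_cong) (simp add: kernel_empty)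
  then show ?case by simp
next
  case (compl A)
  then have "A \<in> sigma_L S T" by (simp add: sigma_L_def)
  then have "(\<lambda>s. T n s (S - A)) \<in> borel_measurable (L_measure S T) \<longleftrightarrow>
      (\<lambda>s. T n s (sem S T FTop) - T n s A) \<in> borel_measurable (L_measure S T)"
    by (intro measurable_cong) (simp add: kernel_Diff)
  moreover have "(\<lambda>s. T n s (sem S T FTop) - T n s A) \<in> borel_measurable (L_measure S T)"
    using measurable_kernel_formula[of FTop n] compl(2) by (intro borel_measurable_diff) simp_all
  ultimately show ?case by simp
next
  case (union A)
  then have "range A \<subseteq> sigma_L S T" by (simp add: sigma_L_def)
  then have "(\<lambda>s. T n s (\<Union>i. A i)) \<in> borel_measurable (L_measure S T) \<longleftrightarrow>
      (\<lambda>s. \<Sum>i. T n s (A i)) \<in> borel_measurable (L_measure S T)"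
    using union(1) by (intro measurable_cong) (simp add: sums_unique kernel_sums)
  moreover have "(\<lambda>s. \<Sum>i. T n s (A i)) \<in> borel_measurable (L_measure S T)"
    using union(3) by (rule borel_measurable_suminf)
  ultimately show ?case by simp
qed

lemma sigma_L_kernel_greater: "A \<in> sigma_L S T \<Longrightarrow> {s \<in> S. r < T n s A} \<in> sigma_L S T"
  using measurable_kernel[of A n] unfolding borel_measurable_iff_greater by simp

lemma sigma_L_kernel_less: "A \<in> sigma_L S T \<Longrightarrow> {s \<in> S. T n s A < r} \<in> sigma_L S T"
  using measurable_kernel[of A n] unfolding borel_measurable_iff_less by simp

end

lemma extends_lebesgue_prob_space:
  assumes "extends_lebesgue V m"
  shows "prob_space m"
proof
  have "I01 \<in> sets borel" by (simp add: I01_def)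
  then show "emeasure m (space m) = 1"
    using assms by (simp add: extends_lebesgue_def I01_def)
qed

lemma extends_lebesgue_measure_I01:
  assumes "extends_lebesgue V m"
  shows "measure m I01 = 1"
  using prob_space.prob_space[OF extends_lebesgue_prob_space[OF assms]] assms
  by (simp add: extends_lebesgue_def)

lemma fiber_Int [simp]: "fiber (A \<inter> B) \<gamma> = fiber A \<gamma> \<inter> fiber B \<gamma>"
  by (auto simp: fiber_def)

lemma fiber_Diff [simp]: "fiber (A - B) \<gamma> = fiber A \<gamma> - fiber B \<gamma>"
  by (auto simp: fiber_def)

lemma fiber_UN [simp]: "fiber (\<Union>i. A i) \<gamma> = (\<Union>i. fiber (A i) \<gamma>)"
  by (auto simp: fiber_def)

lemma fiber_empty [simp]: "fiber {} \<gamma> = {}"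
  by (auto simp: fiber_def)

lemma fiber_Times [simp]: "fiber (X \<times> Y) \<gamma> = (if \<gamma> \<in> Y then X else {})"
  by (auto simp: fiber_def)

lemma disjoint_family_fiber: "disjoint_family A \<Longrightarrow> disjoint_family (\<lambda>i. fiber (A i) \<gamma>)"
  by (auto simp: disjoint_family_on_def fiber_def)

lemma borel_measurable_tauS_fst: "(\<lambda>x. tauS m0 m1 q \<alpha> n (x, \<gamma>) A) \<in> borel_measurable borel"
proof -
  have "{x \<in> space borel. x < q n} \<in> sets borel" by measurable
  then show ?thesis by (simp add: tauS_def Let_def measurable_If)
qed

context
  fixes M :: "real measure" and V :: "real set"
  assumes sets_M: "sets M = BV V"
begin

lemma I01_Int_borel_in_sets:
  assumes "B \<in> sets borel"
  shows "I01 \<inter> B \<in> sets M"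
  unfolding sets_M BV_def using assms by (intro sigma_sets.Basic) (auto simp: sets_restrict_space)

lemma fiber_sem_in_sets: "fiber (sem (I01 \<times> UNIV) (tauS m0 m1 q \<alpha>) f) \<gamma> \<in> sets M"
proof (induction f)
  case FTop
  show ?case using I01_Int_borel_in_sets[of UNIV] by simp
next
  case (FAnd f g)
  then show ?case by simp
next
  case (FDia n r f)
  have "fiber (sem (I01 \<times> UNIV) (tauS m0 m1 q \<alpha>) (FDia n r f)) \<gamma> =
    I01 \<inter> {x. of_rat r < tauS m0 m1 q \<alpha> n (x, \<gamma>) (sem (I01 \<times> UNIV) (tauS m0 m1 q \<alpha>) f)}"
    by (auto simp: fiber_def)
  also have "\<dots> \<in> sets M"
    using borel_measurable_tauS_fst by (intro I01_Int_borel_in_sets) measurable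
  finally show ?case .
qed

lemma fiber_in_sets:
  assumes "A \<in> sigma_L (I01 \<times> UNIV) (tauS m0 m1 q \<alpha>)"
  shows "fiber A \<gamma> \<in> sets M"
  using assms unfolding sigma_L_def
proof (induction rule: sigma_sets.induct)
  case (Basic A)
  then show ?case using fiber_sem_in_sets by blast
next
  case Empty
  then show ?case by simp
next
  case (Compl A)
  then show ?case using I01_Int_borel_in_sets[of UNIV] by auto
next
  case (Union A)
  then show ?case by auto
qed

end

lemma tauS_nonneg_le_1:
  assumes m0: "extends_lebesgue V m0" and m1: "extends_lebesgue V m1" and x: "x \<in> I01"
  shows "0 \<le> tauS m0 m1 q \<alpha> n (x, \<eta>) A" "tauS m0 m1 q \<alpha> n (x, \<eta>) A \<le> 1"
proof -
  interpret m0: prob_space m0 by (rule extends_lebesgue_prob_space[OF m0])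
  interpret m1: prob_space m1 by (rule extends_lebesgue_prob_space[OF m1])
  from x have "0 < x" "x < 1" by (simp_all add: I01_def)
  moreover from this have "x * m0.prob B \<le> 1" for B by (intro mult_le_one) simp_all
  ultimately show "0 \<le> tauS m0 m1 q \<alpha> n (x, \<eta>) A" "tauS m0 m1 q \<alpha> n (x, \<eta>) A \<le> 1"
    by (simp_all add: tauS_def Let_def)
qed

lemma sums_measure_fiber:
  assumes m: "extends_lebesgue V m" and disj: "disjoint_family A"
    and A: "range A \<subseteq> sigma_L (I01 \<times> UNIV) (tauS m0 m1 q \<alpha>)"
  shows "(\<lambda>i. measure m (fiber (A i) \<gamma>)) sums measure m (fiber (\<Union>i. A i) \<gamma>)"
proof -
  interpret prob_space m by (rule extends_lebesgue_prob_space[OF m])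
  have "sets m = BV V" using m by (simp add: extends_lebesgue_def)
  moreover have "A i \<in> sigma_L (I01 \<times> UNIV) (tauS m0 m1 q \<alpha>)" for i using A by blast
  ultimately have "fiber (A i) \<gamma> \<in> sets m" for i by (rule fiber_in_sets)
  then show ?thesis
    unfolding fiber_UN by (auto intro!: finite_measure_UNION disjoint_family_fiber[OF disj])
qed

lemma sums_tauS:
  assumes m0: "extends_lebesgue V m0" and m1: "extends_lebesgue V m1"
    and disj: "disjoint_family A" and A: "range A \<subseteq> sigma_L (I01 \<times> UNIV) (tauS m0 m1 q \<alpha>)"
  shows "(\<lambda>i. tauS m0 m1 q \<alpha> n s (A i)) sums tauS m0 m1 q \<alpha> n s (\<Union>i. A i)"
proof -
  note m0_sums = sums_measure_fiber[OF m0 disj A] and m1_sums = sums_measure_fiber[OF m1 disj A]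
  obtain x \<eta> where s: "s = (x, \<eta>)" by fastforce
  consider "\<eta> = ord_zero" | "\<eta> \<noteq> ord_zero" "x < q n" | "\<eta> \<noteq> ord_zero" "\<not> x < q n" by blast
  then show ?thesis
  proof cases
    case 1
    then show ?thesis using sums_mult[OF m0_sums, of x] by (simp add: s tauS_def Let_def)
  next
    case 2
    then show ?thesis using m0_sums by (simp add: s tauS_def Let_def)
  next
    case 3
    then show ?thesis using m1_sums by (simp add: s tauS_def Let_def)
  qed
qed

lemma subprob_kernels_tauS:
  fixes \<alpha> :: "nat \<Rightarrow> 'b::wellorder \<Rightarrow> 'b"
  assumes m0: "extends_lebesgue V m0" and m1: "extends_lebesgue V m1"
  shows "subprob_kernels_on_sigma_L (I01 \<times> UNIV) (tauS m0 m1 q \<alpha>)"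
proof unfold_locales
  fix n and s :: "real \<times> 'b" and A
  assume "s \<in> I01 \<times> UNIV"
  then obtain x \<eta> where "s = (x, \<eta>)" "x \<in> I01" by blast
  then show "0 \<le> tauS m0 m1 q \<alpha> n s A" "tauS m0 m1 q \<alpha> n s A \<le> 1"
    using tauS_nonneg_le_1[OF m0 m1] by simp_all
next
  fix n and s :: "real \<times> 'b" and A :: "nat \<Rightarrow> (real \<times> 'b) set"
  assume "disjoint_family A" "range A \<subseteq> sigma_L (I01 \<times> UNIV) (tauS m0 m1 q \<alpha>)"
  then show "(\<lambda>i. tauS m0 m1 q \<alpha> n s (A i)) sums tauS m0 m1 q \<alpha> n s (\<Union>i. A i)"
    by (rule sums_tauS[OF m0 m1])
qed

lemma tauS_cylinder:
  assumes "extends_lebesgue V m0" "extends_lebesgue V m1"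
  shows "tauS m0 m1 q \<alpha> n (x, \<eta>) (I01 \<times> {\<gamma>}) =
    (if \<eta> = ord_zero then (if \<gamma> = ord_zero then x else 0) else if \<alpha> n \<eta> = \<gamma> then 1 else 0)"
  using extends_lebesgue_measure_I01[OF assms(1)] extends_lebesgue_measure_I01[OF assms(2)]
  by (simp add: tauS_def Let_def)

lemma nonzero_ordinal_cases:
  assumes "\<eta> \<noteq> ord_zero"
  obtains "is_limit \<eta>" | \<zeta> where "is_succ_of \<eta> \<zeta>"
  using assms unfolding is_limit_def by blast

lemma alpha_seq_succ: "alpha_seq \<alpha> \<Longrightarrow> is_succ_of \<eta> \<zeta> \<Longrightarrow> \<alpha> n \<eta> = \<zeta>"
  unfolding alpha_seq_def by blast

lemma alpha_seq_limit:
  assumes "alpha_seq \<alpha>" "is_limit l"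
  shows "strict_mono (\<lambda>n. \<alpha> n l)" "\<alpha> n l < l" "\<zeta> < l \<Longrightarrow> \<exists>n. \<zeta> \<le> \<alpha> n l"
  using assms unfolding alpha_seq_def by blast+

lemma alpha_seq_less:
  assumes "alpha_seq \<alpha>" "\<eta> \<noteq> ord_zero"
  shows "\<alpha> n \<eta> < \<eta>"
  using assms(2)
proof (cases rule: nonzero_ordinal_cases)
  case 1
  then show ?thesis using alpha_seq_limit(2)[OF assms(1)] by blast
next
  case (2 \<zeta>)
  then show ?thesis using alpha_seq_succ[OF assms(1)] by (simp add: is_succ_of_def)
qed

text \<open>Successors have constant sequences, limits strictly increasing cofinal ones.\<close>

lemma alpha_seq_inj:
  assumes \<alpha>: "alpha_seq \<alpha>" and "\<eta> \<noteq> ord_zero" "\<eta>' \<noteq> ord_zero"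
    and same: "\<And>n. \<alpha> n \<eta> = \<alpha> n \<eta>'"
  shows "\<eta> = \<eta>'"
proof -
  have limit_not_const: "\<alpha> 0 l \<noteq> \<alpha> 1 l" if "is_limit l" for l
    using strict_monoD[OF alpha_seq_limit(1)[OF \<alpha> that], of 0 1] by simp
  have limit_le: "l \<le> l'" if "is_limit l" "is_limit l'" "\<And>n. \<alpha> n l = \<alpha> n l'" for l l'
  proof (rule ccontr)
    assume "\<not> l \<le> l'"
    then obtain n where "l' \<le> \<alpha> n l" using alpha_seq_limit(3)[OF \<alpha> \<open>is_limit l\<close>] by force
    then show False using alpha_seq_limit(2)[OF \<alpha> \<open>is_limit l'\<close>, of n] that(3)[of n] by simp
  qed
  show ?thesis
    using \<open>\<eta> \<noteq> ord_zero\<close>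
  proof (cases rule: nonzero_ordinal_cases)
    case 1
    from \<open>\<eta>' \<noteq> ord_zero\<close> show ?thesis
    proof (cases rule: nonzero_ordinal_cases)
      case 1
      with \<open>is_limit \<eta>\<close> show ?thesis using limit_le same by (metis order_antisym)
    next
      case (2 \<zeta>')
      then show ?thesis using limit_not_const[OF \<open>is_limit \<eta>\<close>] same alpha_seq_succ[OF \<alpha>] by metis
    qed
  next
    case (2 \<zeta>)
    from \<open>\<eta>' \<noteq> ord_zero\<close> show ?thesis
    proof (cases rule: nonzero_ordinal_cases)
      case 1
      then show ?thesis using limit_not_const \<open>is_succ_of \<eta> \<zeta>\<close> same alpha_seq_succ[OF \<alpha>] by metis
    next
      case (2 \<zeta>')
      then have "\<zeta> = \<zeta>'" using \<open>is_succ_of \<eta> \<zeta>\<close> same[of 0] alpha_seq_succ[OF \<alpha>] by metis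
      then show ?thesis using \<open>is_succ_of \<eta> \<zeta>\<close> \<open>is_succ_of \<eta>' \<zeta>'\<close>
        unfolding is_succ_of_def by (metis linorder_neq_iff)
    qed
  qed
qed

lemma zero_cylinder_in_sigma_L:
  fixes \<alpha> :: "nat \<Rightarrow> 'b::wellorder \<Rightarrow> 'b"
  assumes m0: "extends_lebesgue V m0" and m1: "extends_lebesgue V m1"
  shows "I01 \<times> {ord_zero} \<in> sigma_L (I01 \<times> UNIV) (tauS m0 m1 q \<alpha>)"
proof -
  let ?S = "I01 \<times> (UNIV :: 'b set)" and ?T = "tauS m0 m1 q \<alpha>"
  interpret subprob_kernels_on_sigma_L ?S ?T by (rule subprob_kernels_tauS[OF m0 m1])
  have tau_0_space: "?T 0 (x, \<eta>) ?S = (if \<eta> = ord_zero then x else 1)" for x \<eta>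
    using extends_lebesgue_measure_I01[OF m0] extends_lebesgue_measure_I01[OF m1]
    by (simp add: tauS_def Let_def)
  have "{s \<in> ?S. ?T 0 s ?S < 1} = I01 \<times> {ord_zero}"
  proof (intro set_eqI)
    fix s :: "real \<times> 'b"
    obtain x \<eta> where s: "s = (x, \<eta>)" by fastforce
    have "x \<in> I01 \<Longrightarrow> x < 1" by (simp add: I01_def)
    then show "s \<in> {s \<in> ?S. ?T 0 s ?S < 1} \<longleftrightarrow> s \<in> I01 \<times> {ord_zero}"
      by (auto simp: s tau_0_space)
  qed
  moreover have "{s \<in> ?S. ?T 0 s ?S < 1} \<in> sigma_L ?S ?T"
    by (rule sigma_L_kernel_less) (simp add: sigma_L_def sigma_sets_top)
  ultimately show ?thesis by simp
qed

lemma nonzero_cylinder_eq: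
  fixes \<alpha> :: "nat \<Rightarrow> 'b::wellorder \<Rightarrow> 'b"
  assumes m0: "extends_lebesgue V m0" and m1: "extends_lebesgue V m1" and \<alpha>: "alpha_seq \<alpha>"
    and a: "a \<noteq> ord_zero"
  shows "I01 \<times> {a} = (\<Inter>n. {s \<in> I01 \<times> UNIV. 1/2 < tauS m0 m1 q \<alpha> n s (I01 \<times> {\<alpha> n a})})
    - I01 \<times> {ord_zero}"
    (is "_ = ?D - _")
proof (intro set_eqI)
  fix s :: "real \<times> 'b"
  obtain x \<eta> where s: "s = (x, \<eta>)" by fastforce
  show "s \<in> I01 \<times> {a} \<longleftrightarrow> s \<in> ?D - I01 \<times> {ord_zero}"
  proof (cases "\<eta> = ord_zero")
    case True
    then show ?thesis using a by (simp add: s)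
  next
    case \<eta>: False
    have "s \<in> ?D - I01 \<times> {ord_zero} \<longleftrightarrow> x \<in> I01 \<and> (\<forall>n. \<alpha> n \<eta> = \<alpha> n a)"
      using \<eta> by (simp add: s tauS_cylinder[OF m0 m1])
    also have "\<dots> \<longleftrightarrow> x \<in> I01 \<and> \<eta> = a"
      using alpha_seq_inj[OF \<alpha> \<eta> a] by blast
    finally show ?thesis by (simp add: s)
  qed
qed

lemma cylinder_in_sigma_L:
  fixes \<alpha> :: "nat \<Rightarrow> 'b::wellorder \<Rightarrow> 'b" and a :: 'b
  assumes m0: "extends_lebesgue V m0" and m1: "extends_lebesgue V m1" and \<alpha>: "alpha_seq \<alpha>"
  shows "I01 \<times> {a} \<in> sigma_L (I01 \<times> UNIV) (tauS m0 m1 q \<alpha>)"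
proof (induction a rule: less_induct)
  case (less a)
  let ?S = "I01 \<times> (UNIV :: 'b set)" and ?T = "tauS m0 m1 q \<alpha>"
  interpret subprob_kernels_on_sigma_L ?S ?T by (rule subprob_kernels_tauS[OF m0 m1])
  interpret sigma_algebra ?S "sigma_L ?S ?T" by (rule sigma_algebra_sigma_L)
  show ?case
  proof (cases "a = ord_zero")
    case True
    then show ?thesis using zero_cylinder_in_sigma_L[OF m0 m1] by simp
  next
    case False
    have "I01 \<times> {\<alpha> n a} \<in> sigma_L ?S ?T" for n
      using less alpha_seq_less[OF \<alpha> False] by simp
    then have "{s \<in> ?S. 1/2 < ?T n s (I01 \<times> {\<alpha> n a})} \<in> sigma_L ?S ?T" for n
      by (rule sigma_L_kernel_greater)
    then have "(\<Inter>n. {s \<in> ?S. 1/2 < ?T n s (I01 \<times> {\<alpha> n a})}) - I01 \<times> {ord_zero}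
        \<in> sigma_L ?S ?T"
      using zero_cylinder_in_sigma_L[OF m0 m1] by (intro Diff countable_INT) auto
    then show ?thesis using nonzero_cylinder_eq[OF m0 m1 \<alpha> False] by simp
  qed
qed

theorem lemma5p5:
  fixes V :: "real set" and m0 m1 :: "real measure" and q :: "nat \<Rightarrow> real"
    and \<alpha> :: "nat \<Rightarrow> 'b::wellorder \<Rightarrow> 'b" and a :: 'b
  assumes beta_le_omega1: "\<And>\<eta>::'b. countable {\<zeta>. \<zeta> < \<eta>}"
    and V_sub: "V \<subseteq> I01"
    and V_nonmeas: "V \<notin> sets lebesgue"
    and m0: "extends_lebesgue V m0"
    and m1: "extends_lebesgue V m1"
    and m01: "emeasure m0 V \<noteq> emeasure m1 V"
    and q_enum: "bij_betw q UNIV (\<rat> \<inter> I01)"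
    and alpha: "alpha_seq \<alpha>"
  shows "I01 \<times> {a} \<in> sigma_L (I01 \<times> (UNIV :: 'b set)) (tauS m0 m1 q \<alpha>)"
  using m0 m1 alpha by (rule cylinder_in_sigma_L)

end
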